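(* Assume Assumptions 1 and let $s\in(0,1/2)$. Let $\{f_\alpha:\alpha\in\mathcal J\}\subset C(\overline{\mathbb C^+})$ be bounded and uniformly equicontinuous (for every $\delta>0$ there is $\delta'>0$ such that $|f_\alpha(w)-f_\alpha(w')|<\delta$ for all $\alpha$ whenever $w,w'\in\mathbb C^+\cup\mathbb R$, $|w-w'|<\delta'$). Then the family $\{T_{\kappa,E,s}f_\alpha:\kappa\ge0,\ E\in\mathbb R,\ \alpha\in\mathcal J\}$ is bounded and uniformly equicontinuous in the same sense.
   Context: Assumptions 1: $\nu$ has bounded density (also $\nu$) supported in $[-K,K]$, $K<\infty$; $\sigma$ is a probability measure on $\mathbb R^2$ supported in $[-1,1]^2$. $\overline{\mathbb C^+}=\mathbb C^+\cup\mathbb R\cup\{i\infty\}$, $C(\overline{\mathbb C^+})$ the continuous complex functions on $\mathbb C^+\cup\mathbb R$ with a finite limit at infinity, sup-norm. For $\kappa\ge0$, $\mu$ is the law of $q=(r+\kappa p_0,r+\kappa p_1)$ with $r\sim\nu$, $(p_0,p_1)\sim\sigma$ independent. For $E\in\mathbb R$, $\phi^\pm_{E,q}(w)=\tfrac12\big(\frac{-1}{w+(E-q_0)/\sqrt2}\pm\frac{-1}{w+(E-q_1)/\sqrt2}\big)$, $\phi^\pm_{E,q}(i\infty)=0$, and $(T_{\kappa,E,s}f)(w)=\int f(\phi^+_{E,q}(w))\big(|\phi^+_{E,q}(w)|^s+|\phi^-_{E,q}(w)|^s\big)d\mu(q)$, $(T_{\kappa,E,s}f)(i\infty)=0$. 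*)

theory Defs
  imports "HOL-Probability.Probability"
begin

text \<open>Closed upper half-plane (finite part): C^+ union R.\<close>
definition cuhp :: "complex set" where
  "cuhp = {z. Im z \<ge> 0}"

definition phi_plus :: "real \<Rightarrow> real \<times> real \<Rightarrow> complex \<Rightarrow> complex" where
  "phi_plus E q w = (1/2) * ((-1) / (w + complex_of_real ((E - fst q) / sqrt 2))
                          + (-1) / (w + complex_of_real ((E - snd q) / sqrt 2)))"

definition phi_minus :: "real \<Rightarrow> real \<times> real \<Rightarrow> complex \<Rightarrow> complex" where
  "phi_minus E q w = (1/2) * ((-1) / (w + complex_of_real ((E - fst q) / sqrt 2))
                          - (-1) / (w + complex_of_real ((E - snd q) / sqrt 2)))"

definition mu_law :: "(real \<Rightarrow> real) \<Rightarrow> (real \<times> real) measure \<Rightarrow> real \<Rightarrow> (real \<times> real) measure" where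
  "mu_law g \<sigma> \<kappa> = distr (density lborel (\<lambda>r. ennreal (g r)) \<Otimes>\<^sub>M \<sigma>) borel
      (\<lambda>(r, p). (r + \<kappa> * fst p, r + \<kappa> * snd p))"

text \<open>The operator T_{kappa,E,s} on the finite points w (the value at i infinity is 0).\<close>
definition T_op :: "(real \<Rightarrow> real) \<Rightarrow> (real \<times> real) measure \<Rightarrow> real \<Rightarrow> real \<Rightarrow> real
                    \<Rightarrow> (complex \<Rightarrow> complex) \<Rightarrow> complex \<Rightarrow> complex" where
  "T_op g \<sigma> \<kappa> E s f w =
     (LINT q|mu_law g \<sigma> \<kappa>. f (phi_plus E q w) *
        complex_of_real (cmod (phi_plus E q w) powr s + cmod (phi_minus E q w) powr s))"

definition in_C_cuhp :: "(complex \<Rightarrow> complex) \<Rightarrow> bool" where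
  "in_C_cuhp f \<longleftrightarrow> continuous_on cuhp f \<and> (\<exists>L. (f \<longlongrightarrow> L) (inf at_infinity (principal cuhp)))"

end

theory Submission
  imports Defs
begin

(* T f (w) is the mu-average of the integrand F(q) = f(phi^+(w)) * (|phi^+(w)|^s + |phi^-(w)|^s).
   Write z_0, z_1 for the two poles w + (E - q_0)/sqrt 2 and w + (E - q_1)/sqrt 2; the weight is
   at most 2 (|z_0|^-s + |z_1|^-s).  The whole argument rests on one integral estimate: since
   each coordinate of q = (r + kappa p_0, r + kappa p_1) contains r ~ nu, whose density is bounded
   by M, the truncated singularity |z_i|^-s 1{|z_i| < rho} has mu-integral at most C rho^(1-s)
   with C = 2 sqrt 2 M / (1 - s), uniformly in w, E and kappa (here s < 1 suffices).

   Boundedness follows by splitting |z|^-s into its part near 0 and a constant.  For the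
   continuity, fix scales rho and eta.  If both poles are at distance >= eta from 0, the maps
   w -> phi^+-(w) are Lipschitz with bounded values near w, and the equicontinuity of f and the
   uniform continuity of x -> x^s on a compact interval control F(w) - F(w').  Otherwise the
   crude bound |F(w)| + |F(w')| is used; it is small on average, because the truncated
   singularities at scale rho are small and the event "some pole is eta-close to 0" has
   probability O(eta) (a Markov-type bound by the same integral estimate).  Choosing rho, then
   eta, then the tolerances for f and x^s makes the total error small. *)

definition trunc_sing :: "real \<Rightarrow> real \<Rightarrow> complex \<Rightarrow> ennreal" where
  "trunc_sing s \<rho> z = (if cmod z < \<rho> then (if z = 0 then \<infinity> else ennreal (cmod z powr -s)) else 0)"

lemma trunc_sing_measurable [measurable]: "trunc_sing s \<rho> \<in> borel_measurable borel"
  unfolding trunc_sing_def by measurable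

lemma trunc_sing_le_Re:
  assumes "0 < s"
  shows "trunc_sing s \<rho> z \<le> trunc_sing s \<rho> (of_real (Re z))"
proof -
  have Re_le: "\<bar>Re z\<bar> \<le> cmod z" by (rule abs_Re_le_cmod)
  show ?thesis
  proof (cases "cmod z < \<rho> \<and> Re z \<noteq> 0")
    case True
    then have "cmod z powr -s \<le> \<bar>Re z\<bar> powr -s"
      using Re_le assms by (intro powr_mono2') auto
    then show ?thesis using True Re_le by (auto simp: trunc_sing_def)
  qed (use Re_le in \<open>auto simp: trunc_sing_def\<close>)
qed

lemma nn_integral_trunc_sing_real:
  assumes s: "0 < s" "s < 1" and \<rho>: "0 < \<rho>"
  shows "(\<integral>\<^sup>+x. trunc_sing s \<rho> (of_real x) \<partial>lborel) \<le> ennreal (2 * \<rho> powr (1-s) / (1-s))"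
proof -
  define P where "P x = ennreal (indicator {0..\<rho>} x * x powr (-s))" for x :: real
  have P_meas [measurable]: "P \<in> borel_measurable borel" unfolding P_def by measurable
  have int_P: "integral\<^sup>N lborel P = \<rho> powr (1-s) / (1-s)"
    unfolding P_def
    using nn_integral_has_integral_lebesgue[OF _ has_integral_powr_from_0[of "-s" \<rho>]] s \<rho>
    by simp
  have int_P_reflected: "(\<integral>\<^sup>+x. P (-x) \<partial>lborel) = integral\<^sup>N lborel P"
    using nn_integral_real_affine[OF P_meas, of "-1" 0] by simp
  have "(\<integral>\<^sup>+x. trunc_sing s \<rho> (of_real x) \<partial>lborel) \<le> (\<integral>\<^sup>+x. P x + P (-x) \<partial>lborel)"
  proof (rule nn_integral_mono_AE)
    show "AE x in lborel. trunc_sing s \<rho> (of_real x) \<le> P x + P (-x)"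
      using AE_lborel_singleton[of 0]
      by eventually_elim (auto simp: trunc_sing_def P_def indicator_def)
  qed
  also have "\<dots> = integral\<^sup>N lborel P + (\<integral>\<^sup>+x. P (-x) \<partial>lborel)"
    by (rule nn_integral_add) auto
  also have "\<dots> = ennreal (2 * \<rho> powr (1-s) / (1-s))"
    using int_P_reflected int_P s \<rho> by (simp flip: ennreal_plus)
  finally show ?thesis .
qed

lemma nn_integral_density_trunc_sing:
  fixes g :: "real \<Rightarrow> real" and c :: complex and t :: real
  assumes [measurable]: "g \<in> borel_measurable borel"
    and g_nonneg: "\<And>x. 0 \<le> g x" and g_le: "\<And>x. g x \<le> M"
    and s: "0 < s" "s < 1" and \<rho>: "0 < \<rho>" and t: "t \<noteq> 0"
  shows "(\<integral>\<^sup>+r. ennreal (g r) * trunc_sing s \<rho> (c + of_real (t * r)) \<partial>lborel)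
           \<le> ennreal (M / \<bar>t\<bar> * (2 * \<rho> powr (1-s) / (1-s)))"
proof -
  define h where "h x = trunc_sing s \<rho> (of_real x)" for x :: real
  have h_meas [measurable]: "h \<in> borel_measurable borel" unfolding h_def by measurable
  have M: "0 \<le> M" using g_nonneg[of 0] g_le[of 0] by linarith
  have "(\<integral>\<^sup>+r. ennreal (g r) * trunc_sing s \<rho> (c + of_real (t * r)) \<partial>lborel)
          \<le> (\<integral>\<^sup>+r. ennreal M * h (Re c + t * r) \<partial>lborel)"
  proof (rule nn_integral_mono)
    fix r
    have "trunc_sing s \<rho> (c + of_real (t * r)) \<le> h (Re c + t * r)"
      using trunc_sing_le_Re[OF s(1), of \<rho> "c + of_real (t * r)"] by (simp add: h_def)
    then show "ennreal (g r) * trunc_sing s \<rho> (c + of_real (t * r)) \<le> ennreal M * h (Re c + t * r)"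
      by (intro mult_mono) (auto intro: ennreal_leI g_le)
  qed
  also have "\<dots> = ennreal M * (\<integral>\<^sup>+r. h (Re c + t * r) \<partial>lborel)"
    by (rule nn_integral_cmult) measurable
  also have "(\<integral>\<^sup>+r. h (Re c + t * r) \<partial>lborel) = ennreal (1 / \<bar>t\<bar>) * (\<integral>\<^sup>+x. h x \<partial>lborel)"
  proof -
    have "ennreal (1 / \<bar>t\<bar>) * ennreal \<bar>t\<bar> = 1"
      using t by (simp flip: ennreal_mult)
    then show ?thesis
      using nn_integral_real_affine[OF h_meas t, of "Re c"] by (simp add: mult.assoc [symmetric])
  qed
  also have "ennreal M * (ennreal (1 / \<bar>t\<bar>) * (\<integral>\<^sup>+x. h x \<partial>lborel))
      \<le> ennreal M * (ennreal (1 / \<bar>t\<bar>) * ennreal (2 * \<rho> powr (1-s) / (1-s)))"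
    unfolding h_def by (intro mult_left_mono nn_integral_trunc_sing_real s \<rho>) auto
  also have "\<dots> = ennreal (M / \<bar>t\<bar> * (2 * \<rho> powr (1-s) / (1-s)))"
    using M s by (simp add: ennreal_mult[symmetric])
  finally show ?thesis .
qed

lemma powr_neg_le_trunc_sing:
  assumes "0 < s" "0 < \<rho>"
  shows "ennreal (cmod z powr -s) \<le> trunc_sing s \<rho> z + ennreal (\<rho> powr -s)"
proof (cases "cmod z < \<rho>")
  case False
  then have "cmod z powr -s \<le> \<rho> powr -s" using assms by (intro powr_mono2') auto
  then show ?thesis using False by (simp add: trunc_sing_def ennreal_leI)
qed (auto simp: trunc_sing_def)

lemma one_le_trunc_sing:
  assumes s: "0 < s" and \<eta>: "0 < \<eta>" and near: "cmod z < \<eta>"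
  shows "1 \<le> ennreal (\<eta> powr s) * trunc_sing s \<eta> z"
proof (cases "z = 0")
  case False
  have "\<eta> powr -s \<le> cmod z powr -s" using False near s by (intro powr_mono2') auto
  then have "1 \<le> \<eta> powr s * cmod z powr -s" using \<eta> by (simp add: powr_minus field_simps)
  then show ?thesis using False near by (simp add: trunc_sing_def ennreal_mult[symmetric] ennreal_leI)
qed (use near \<eta> in \<open>simp add: trunc_sing_def ennreal_mult_top\<close>)

lemma fst_snd_borel_measurable [measurable]:
  "fst \<in> borel_measurable (borel :: (real \<times> real) measure)"
  "snd \<in> borel_measurable (borel :: (real \<times> real) measure)"
  by (intro borel_measurable_continuous_onI continuous_intros)+

lemma mu_law_map_measurable:
  assumes "sets \<sigma> = sets (borel :: (real \<times> real) measure)"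
  shows "(\<lambda>(r::real, p::real \<times> real). (r + \<kappa> * fst p, r + \<kappa> * snd p))
           \<in> measurable (density lborel (\<lambda>r. ennreal (g r)) \<Otimes>\<^sub>M \<sigma>) borel"
proof -
  have sets_eq: "sets (density lborel (\<lambda>r. ennreal (g r)) \<Otimes>\<^sub>M \<sigma>) = sets (borel \<Otimes>\<^sub>M (borel :: (real \<times> real) measure))"
    by (rule sets_pair_measure_cong) (auto simp: assms)
  show ?thesis
    unfolding measurable_cong_sets[OF sets_eq refl] borel_prod
    by (intro borel_measurable_continuous_onI) (auto simp: case_prod_beta intro!: continuous_intros)
qed

lemma sets_mu_law [measurable_cong]: "sets (mu_law g \<sigma> \<kappa>) = sets borel"
  by (simp add: mu_law_def)

lemma prob_space_mu_law:
  assumes "prob_space (density lborel (\<lambda>r. ennreal (g r)))" and "prob_space \<sigma>"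
    and "sets \<sigma> = sets (borel :: (real \<times> real) measure)"
  shows "prob_space (mu_law g \<sigma> \<kappa>)"
proof -
  interpret N: prob_space "density lborel (\<lambda>r. ennreal (g r))" by fact
  interpret S: prob_space \<sigma> by fact
  interpret pair_prob_space "density lborel (\<lambda>r. ennreal (g r))" \<sigma> ..
  show ?thesis unfolding mu_law_def
    by (rule prob_space_distr[OF mu_law_map_measurable]) fact
qed

lemma nn_integral_mu_law:
  fixes h :: "real \<times> real \<Rightarrow> ennreal"
  assumes [measurable]: "g \<in> borel_measurable borel" "h \<in> borel_measurable borel"
    and "prob_space (density lborel (\<lambda>r. ennreal (g r)))" and "prob_space \<sigma>"
    and "sets \<sigma> = sets (borel :: (real \<times> real) measure)"
  shows "(\<integral>\<^sup>+q. h q \<partial>mu_law g \<sigma> \<kappa>)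
           = (\<integral>\<^sup>+p. (\<integral>\<^sup>+r. ennreal (g r) * h (r + \<kappa> * fst p, r + \<kappa> * snd p) \<partial>lborel) \<partial>\<sigma>)"
proof -
  define N where "N = density lborel (\<lambda>r. ennreal (g r))"
  define \<Phi> where "\<Phi> = (\<lambda>(r::real, p::real \<times> real). (r + \<kappa> * fst p, r + \<kappa> * snd p))"
  interpret N: prob_space N unfolding N_def by fact
  interpret S: prob_space \<sigma> by fact
  interpret pair_sigma_finite N \<sigma> ..
  have \<Phi>_meas: "\<Phi> \<in> measurable (N \<Otimes>\<^sub>M \<sigma>) borel"
    unfolding \<Phi>_def N_def by (rule mu_law_map_measurable) fact
  have "(\<integral>\<^sup>+q. h q \<partial>mu_law g \<sigma> \<kappa>) = (\<integral>\<^sup>+x. h (\<Phi> x) \<partial>(N \<Otimes>\<^sub>M \<sigma>))"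
    unfolding mu_law_def N_def[symmetric] \<Phi>_def[symmetric]
    by (rule nn_integral_distr[OF \<Phi>_meas]) simp
  also have "\<dots> = (\<integral>\<^sup>+p. (\<integral>\<^sup>+r. h (\<Phi> (r, p)) \<partial>N) \<partial>\<sigma>)"
    by (rule nn_integral_snd[symmetric]) (use \<Phi>_meas in measurable)
  also have "\<dots> = (\<integral>\<^sup>+p. (\<integral>\<^sup>+r. ennreal (g r) * h (r + \<kappa> * fst p, r + \<kappa> * snd p) \<partial>lborel) \<partial>\<sigma>)"
    unfolding N_def \<Phi>_def by (subst nn_integral_density) auto
  finally show ?thesis .
qed

definition pole :: "real \<Rightarrow> real \<Rightarrow> complex \<Rightarrow> complex" where
  "pole E x w = w + complex_of_real ((E - x) / sqrt 2)"

lemma phi_plus_pole: "phi_plus E q w = (1/2) * ((-1) / pole E (fst q) w + (-1) / pole E (snd q) w)"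
  and phi_minus_pole: "phi_minus E q w = (1/2) * ((-1) / pole E (fst q) w - (-1) / pole E (snd q) w)"
  by (simp_all add: phi_plus_def phi_minus_def pole_def)

lemma pole_diff [simp]: "pole E x w - pole E x w' = w - w'"
  by (simp add: pole_def)

(* phi^+ maps the closed upper half-plane into itself, since w -> -1/w does. *)
lemma phi_plus_cuhp: "w \<in> cuhp \<Longrightarrow> phi_plus E q w \<in> cuhp"
  by (simp add: cuhp_def phi_plus_def Im_divide')

definition phi_weight :: "real \<Rightarrow> real \<Rightarrow> real \<times> real \<Rightarrow> complex \<Rightarrow> real" where
  "phi_weight E s q w = cmod (phi_plus E q w) powr s + cmod (phi_minus E q w) powr s"

definition T_integrand :: "(complex \<Rightarrow> complex) \<Rightarrow> real \<Rightarrow> real \<Rightarrow> complex \<Rightarrow> real \<times> real \<Rightarrow> complex" where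
  "T_integrand f E s w q = f (phi_plus E q w) * of_real (phi_weight E s q w)"

lemma T_op_eq: "T_op g \<sigma> \<kappa> E s f w = integral\<^sup>L (mu_law g \<sigma> \<kappa>) (T_integrand f E s w)"
  unfolding T_op_def T_integrand_def phi_weight_def ..

(* For s >= 0, |(a +- b)/2|^s <= |a|^s + |b|^s, since |(a +- b)/2| <= max |a| |b|. *)
lemma half_sum_powr_le:
  fixes a b :: complex assumes "0 \<le> s"
  shows "cmod ((1/2) * (a + b)) powr s \<le> cmod a powr s + cmod b powr s"
    and "cmod ((1/2) * (a - b)) powr s \<le> cmod a powr s + cmod b powr s"
proof -
  have max_le: "max (cmod a) (cmod b) powr s \<le> cmod a powr s + cmod b powr s"
    by (cases "cmod a \<le> cmod b") (auto simp: max_def)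
  have "cmod ((1/2) * (a + b)) \<le> max (cmod a) (cmod b)" "cmod ((1/2) * (a - b)) \<le> max (cmod a) (cmod b)"
    using norm_triangle_ineq[of a b] norm_triangle_ineq4[of a b] by (auto simp: norm_mult)
  then show "cmod ((1/2) * (a + b)) powr s \<le> cmod a powr s + cmod b powr s"
    and "cmod ((1/2) * (a - b)) powr s \<le> cmod a powr s + cmod b powr s"
    using powr_mono2[OF assms norm_ge_zero] max_le by (meson order_trans)+
qed

lemma phi_weight_le:
  assumes "0 \<le> s"
  shows "phi_weight E s q w \<le> 2 * (cmod (pole E (fst q) w) powr -s + cmod (pole E (snd q) w) powr -s)"
proof -
  have inv: "cmod ((-1) / z) powr s = cmod z powr -s" for z :: complex
    by (simp add: norm_divide powr_minus inverse_powr divide_inverse norm_inverse)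
  show ?thesis
    using add_mono[OF half_sum_powr_le[OF assms, of "(-1) / pole E (fst q) w" "(-1) / pole E (snd q) w"]]
    unfolding phi_weight_def phi_plus_pole phi_minus_pole inv by simp
qed

lemma T_integrand_norm_le:
  assumes "0 \<le> s" and f_bdd: "\<forall>u\<in>cuhp. cmod (f u) \<le> B" and w: "w \<in> cuhp"
  shows "cmod (T_integrand f E s w q)
           \<le> 2 * B * (cmod (pole E (fst q) w) powr -s + cmod (pole E (snd q) w) powr -s)"
proof -
  have W: "0 \<le> phi_weight E s q w" by (simp add: phi_weight_def)
  have f_le: "cmod (f (phi_plus E q w)) \<le> B" using f_bdd phi_plus_cuhp[OF w] by blast
  have "cmod (T_integrand f E s w q) = cmod (f (phi_plus E q w)) * phi_weight E s q w"
    using W by (simp add: T_integrand_def norm_mult)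
  also have "\<dots> \<le> B * (2 * (cmod (pole E (fst q) w) powr -s + cmod (pole E (snd q) w) powr -s))"
    using f_le W phi_weight_le[OF assms(1)] order_trans[OF norm_ge_zero f_le]
    by (intro mult_mono) auto
  finally show ?thesis by (simp add: algebra_simps)
qed

(* The integrand is measurable in q: compose f with a continuous retraction onto the closed
   half-plane, which does not change it along phi^+. *)
lemma T_integrand_measurable:
  assumes "continuous_on cuhp f" and "w \<in> cuhp"
  shows "T_integrand f E s w \<in> borel_measurable borel"
proof -
  define proj where "proj z = complex_of_real (Re z) + \<i> * of_real (max (Im z) 0)" for z :: complex
  have proj_cont: "continuous_on UNIV proj" unfolding proj_def by (intro continuous_intros)
  have "continuous_on UNIV (\<lambda>z. f (proj z))"
    by (rule continuous_on_compose2[OF assms(1) proj_cont]) (auto simp: proj_def cuhp_def)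
  then have [measurable]: "(\<lambda>z. f (proj z)) \<in> borel_measurable borel"
    by (rule borel_measurable_continuous_onI)
  have "proj (phi_plus E q w) = phi_plus E q w" for q
    using phi_plus_cuhp[OF assms(2)] by (simp add: proj_def cuhp_def complex_eq_iff)
  then have "T_integrand f E s w = (\<lambda>q. f (proj (phi_plus E q w)) * of_real (phi_weight E s q w))"
    by (simp add: T_integrand_def fun_eq_iff)
  also have "\<dots> \<in> borel_measurable borel"
    unfolding phi_plus_def phi_minus_def phi_weight_def by measurable
  finally show ?thesis .
qed

lemma inverse_far:
  fixes z z' :: complex
  assumes \<eta>: "0 < \<eta>" and far: "\<eta> \<le> cmod z" and close: "cmod (z - z') \<le> \<eta>/2"
  shows "cmod ((-1)/z) \<le> 2/\<eta>" and "cmod ((-1)/z') \<le> 2/\<eta>"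
    and "cmod ((-1)/z - (-1)/z') \<le> 2 * cmod (z - z') / \<eta>^2"
proof -
  have far': "\<eta>/2 \<le> cmod z'"
    using norm_triangle_ineq2[of z z'] far close by (simp add: norm_minus_commute)
  have inv_le: "cmod ((-1)/u) \<le> 1/r" if "0 < r" "r \<le> cmod u" for u :: complex and r
    using that by (simp add: norm_divide divide_le_eq field_simps)
  show "cmod ((-1)/z) \<le> 2/\<eta>" using inv_le[OF \<eta> far] \<eta> by (simp add: field_simps)
  show "cmod ((-1)/z') \<le> 2/\<eta>" using inv_le[of "\<eta>/2", OF _ far'] \<eta> by simp
  have "z \<noteq> 0" "z' \<noteq> 0" using \<eta> far far' by auto
  then have "cmod ((-1)/z - (-1)/z') = cmod (z - z') / (cmod z * cmod z')"
    by (simp add: field_simps norm_divide norm_mult)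
  also have "\<dots> \<le> cmod (z - z') / (\<eta> * (\<eta>/2))"
    using \<eta> far far' by (intro divide_left_mono mult_mono mult_pos_pos) auto
  finally show "cmod ((-1)/z - (-1)/z') \<le> 2 * cmod (z - z') / \<eta>^2"
    by (simp add: power2_eq_square ac_simps)
qed

lemma half_combination_bounds:
  fixes a b a' b' :: complex
  assumes "cmod a \<le> R" "cmod b \<le> R" "cmod (a - a') \<le> L" "cmod (b - b') \<le> L"
  shows "cmod ((1/2) * (a + b)) \<le> R" "cmod ((1/2) * (a - b)) \<le> R"
    and "cmod ((1/2) * (a + b) - (1/2) * (a' + b')) \<le> L"
    and "cmod ((1/2) * (a - b) - (1/2) * (a' - b')) \<le> L"
proof -
  have plus: "(1/2) * (a + b) - (1/2) * (a' + b') = (1/2) * ((a - a') + (b - b'))"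
    and minus: "(1/2) * (a - b) - (1/2) * (a' - b') = (1/2) * ((a - a') - (b - b'))"
    by (simp_all add: field_simps)
  show "cmod ((1/2) * (a + b)) \<le> R" "cmod ((1/2) * (a - b)) \<le> R"
    using assms norm_triangle_ineq[of a b] norm_triangle_ineq4[of a b] by (simp_all add: norm_mult)
  show "cmod ((1/2) * (a + b) - (1/2) * (a' + b')) \<le> L"
    "cmod ((1/2) * (a - b) - (1/2) * (a' - b')) \<le> L"
    unfolding plus minus norm_mult
    using assms norm_triangle_ineq[of "a - a'" "b - b'"] norm_triangle_ineq4[of "a - a'" "b - b'"]
    by simp_all
qed

lemma phi_far:
  assumes \<eta>: "0 < \<eta>" and far: "\<eta> \<le> cmod (pole E (fst q) w)" "\<eta> \<le> cmod (pole E (snd q) w)"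
    and close: "cmod (w - w') \<le> \<eta>/2"
  defines "L \<equiv> 2 * cmod (w - w') / \<eta>^2"
  shows "cmod (phi_plus E q w) \<le> 2/\<eta>" "cmod (phi_minus E q w) \<le> 2/\<eta>"
    and "cmod (phi_plus E q w') \<le> 2/\<eta>" "cmod (phi_minus E q w') \<le> 2/\<eta>"
    and "cmod (phi_plus E q w - phi_plus E q w') \<le> L"
    and "cmod (phi_minus E q w - phi_minus E q w') \<le> L"
proof -
  note inv0 = inverse_far[of \<eta> "pole E (fst q) w" "pole E (fst q) w'"]
  note inv1 = inverse_far[of \<eta> "pole E (snd q) w" "pole E (snd q) w'"]
  note half = half_combination_bounds[of "(-1) / pole E (fst q) w" "2/\<eta>" "(-1) / pole E (snd q) w"
      "(-1) / pole E (fst q) w'" L "(-1) / pole E (snd q) w'"]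
  note half' = half_combination_bounds[of "(-1) / pole E (fst q) w'" "2/\<eta>" "(-1) / pole E (snd q) w'"
      "(-1) / pole E (fst q) w'" 0 "(-1) / pole E (snd q) w'"]
  show "cmod (phi_plus E q w) \<le> 2/\<eta>" "cmod (phi_minus E q w) \<le> 2/\<eta>"
    "cmod (phi_plus E q w - phi_plus E q w') \<le> L" "cmod (phi_minus E q w - phi_minus E q w') \<le> L"
    using half inv0 inv1 \<eta> far close unfolding phi_plus_pole phi_minus_pole L_def by simp_all
  show "cmod (phi_plus E q w') \<le> 2/\<eta>" "cmod (phi_minus E q w') \<le> 2/\<eta>"
    using half' inv0 inv1 \<eta> far close unfolding phi_plus_pole phi_minus_pole by simp_all
qed

lemma T_integrand_diff_far:
  assumes s: "0 < s" and \<eta>: "0 < \<eta>"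
    and f_bdd: "\<forall>u\<in>cuhp. cmod (f u) \<le> B" and w: "w \<in> cuhp" and w': "w' \<in> cuhp"
    and far: "\<eta> \<le> cmod (pole E (fst q) w)" "\<eta> \<le> cmod (pole E (snd q) w)"
    and close: "cmod (w - w') \<le> \<eta>/2"
    and f_mod: "\<forall>u\<in>cuhp. \<forall>v\<in>cuhp. cmod (u - v) \<le> 2 * cmod (w - w') / \<eta>^2 \<longrightarrow> cmod (f u - f v) \<le> \<epsilon>f"
    and powr_mod: "\<forall>x\<in>{0..2/\<eta>}. \<forall>y\<in>{0..2/\<eta>}.
                     \<bar>x - y\<bar> \<le> 2 * cmod (w - w') / \<eta>^2 \<longrightarrow> \<bar>x powr s - y powr s\<bar> \<le> \<epsilon>p"
  shows "cmod (T_integrand f E s w q - T_integrand f E s w' q) \<le> \<epsilon>f * (4 * \<eta> powr -s) + 2 * B * \<epsilon>p"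
proof -
  note phi = phi_far[OF \<eta> far close]
  let ?P = "phi_plus E q" and ?W = "phi_weight E s q"
  have f_diff: "cmod (f (?P w) - f (?P w')) \<le> \<epsilon>f"
    using f_mod phi_plus_cuhp[OF w] phi_plus_cuhp[OF w'] phi(5) by blast
  have powr_diff: "\<bar>cmod a powr s - cmod b powr s\<bar> \<le> \<epsilon>p"
    if "cmod a \<le> 2/\<eta>" "cmod b \<le> 2/\<eta>" "cmod (a - b) \<le> 2 * cmod (w - w') / \<eta>^2" for a b :: complex
    using powr_mod that norm_triangle_ineq3[of a b] by auto
  have W_diff: "\<bar>?W w - ?W w'\<bar> \<le> 2 * \<epsilon>p"
    using powr_diff[OF phi(1,3,5)] powr_diff[OF phi(2,4,6)] unfolding phi_weight_def by linarith
  have pole_powr: "cmod (pole E x w) powr -s \<le> \<eta> powr -s" if "\<eta> \<le> cmod (pole E x w)" for x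
    using that s \<eta> by (intro powr_mono2') auto
  have W_le: "?W w \<le> 4 * \<eta> powr -s"
    using phi_weight_le[of s E q w] s pole_powr[OF far(1)] pole_powr[OF far(2)] by simp
  have W_nonneg: "0 \<le> ?W w" by (simp add: phi_weight_def)
  have f_le: "cmod (f (?P w')) \<le> B" using f_bdd phi_plus_cuhp[OF w'] by blast
  have "T_integrand f E s w q - T_integrand f E s w' q
          = (f (?P w) - f (?P w')) * of_real (?W w) + f (?P w') * of_real (?W w - ?W w')"
    by (simp add: T_integrand_def algebra_simps)
  then have "cmod (T_integrand f E s w q - T_integrand f E s w' q)
               \<le> cmod (f (?P w) - f (?P w')) * ?W w + cmod (f (?P w')) * \<bar>?W w - ?W w'\<bar>"
    using norm_triangle_ineq[of "(f (?P w) - f (?P w')) * of_real (?W w)" "f (?P w') * of_real (?W w - ?W w')"]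
      W_nonneg
    by (simp add: norm_mult del: of_real_diff)
  also have "\<dots> \<le> \<epsilon>f * (4 * \<eta> powr -s) + B * (2 * \<epsilon>p)"
    using f_diff W_le W_nonneg f_le W_diff order_trans[OF norm_ge_zero f_diff] order_trans[OF norm_ge_zero f_le]
    by (intro add_mono mult_mono) auto
  finally show ?thesis by simp
qed

definition pole_sing :: "real \<Rightarrow> real \<Rightarrow> real \<Rightarrow> real \<times> real \<Rightarrow> complex \<Rightarrow> ennreal" where
  "pole_sing s \<rho> E q w = trunc_sing s \<rho> (pole E (fst q) w) + trunc_sing s \<rho> (pole E (snd q) w)"

lemma T_integrand_norm_le_sing:
  assumes s: "0 < s" and \<rho>: "0 < \<rho>" and f_bdd: "\<forall>u\<in>cuhp. cmod (f u) \<le> B" and w: "w \<in> cuhp"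
  shows "ennreal (cmod (T_integrand f E s w q))
           \<le> ennreal (2 * B) * (pole_sing s \<rho> E q w + ennreal (2 * \<rho> powr -s))"
proof -
  let ?h = "\<lambda>x. cmod (pole E x w) powr -s"
  have B: "0 \<le> B" using f_bdd w by (meson norm_ge_zero order_trans)
  have "ennreal (cmod (T_integrand f E s w q)) \<le> ennreal (2 * B) * (ennreal (?h (fst q)) + ennreal (?h (snd q)))"
    using T_integrand_norm_le[OF _ f_bdd w, of s E q] s B by (simp flip: ennreal_mult ennreal_plus)
  also have "\<dots> \<le> ennreal (2 * B) * ((trunc_sing s \<rho> (pole E (fst q) w) + ennreal (\<rho> powr -s))
                                    + (trunc_sing s \<rho> (pole E (snd q) w) + ennreal (\<rho> powr -s)))"
    by (intro mult_left_mono add_mono powr_neg_le_trunc_sing s \<rho>) auto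
  also have "\<dots> = ennreal (2 * B) * (pole_sing s \<rho> E q w + ennreal (2 * \<rho> powr -s))"
  proof -
    have "ennreal (2 * \<rho> powr -s) = ennreal (\<rho> powr -s) + ennreal (\<rho> powr -s)"
      by (simp flip: ennreal_plus)
    then show ?thesis by (simp add: pole_sing_def ac_simps)
  qed
  finally show ?thesis .
qed

(* Pointwise oscillation when a pole is eta-close to 0: the crude bound, multiplied by the
   Markov factor eta^s pole_sing at scale eta, which is >= 1 on this event. *)
lemma T_integrand_diff_near:
  assumes s: "0 < s" and \<eta>: "0 < \<eta>" and \<rho>: "0 < \<rho>"
    and f_bdd: "\<forall>u\<in>cuhp. cmod (f u) \<le> B" and w: "w \<in> cuhp" and w': "w' \<in> cuhp"
    and near: "cmod (pole E (fst q) w) < \<eta> \<or> cmod (pole E (snd q) w) < \<eta>"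
  shows "ennreal (cmod (T_integrand f E s w q - T_integrand f E s w' q))
           \<le> ennreal (2 * B) * (pole_sing s \<rho> E q w + pole_sing s \<rho> E q w')
             + ennreal (8 * B * \<rho> powr -s * \<eta> powr s) * pole_sing s \<eta> E q w"
proof -
  have B: "0 \<le> B" using f_bdd w by (meson norm_ge_zero order_trans)
  have one: "1 \<le> ennreal (\<eta> powr s) * pole_sing s \<eta> E q w"
    using near one_le_trunc_sing[OF s \<eta>] unfolding pole_sing_def
    by (metis add_increasing add_increasing2 distrib_left zero_le)
  have "ennreal (cmod (T_integrand f E s w q - T_integrand f E s w' q))
          \<le> ennreal (cmod (T_integrand f E s w q)) + ennreal (cmod (T_integrand f E s w' q))"
    by (simp add: ennreal_leI norm_triangle_ineq4 flip: ennreal_plus)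
  also have "\<dots> \<le> ennreal (2 * B) * (pole_sing s \<rho> E q w + ennreal (2 * \<rho> powr -s))
                 + ennreal (2 * B) * (pole_sing s \<rho> E q w' + ennreal (2 * \<rho> powr -s))"
    by (intro add_mono T_integrand_norm_le_sing s \<rho> f_bdd w w')
  also have "\<dots> = ennreal (2 * B) * (pole_sing s \<rho> E q w + pole_sing s \<rho> E q w')
                 + ennreal (8 * B * \<rho> powr -s) * 1"
    using B by (simp add: distrib_left ac_simps flip: ennreal_mult ennreal_plus)
  also have "\<dots> \<le> ennreal (2 * B) * (pole_sing s \<rho> E q w + pole_sing s \<rho> E q w')
                 + ennreal (8 * B * \<rho> powr -s) * (ennreal (\<eta> powr s) * pole_sing s \<eta> E q w)"
    by (intro add_left_mono mult_left_mono one) auto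
  also have "\<dots> = ennreal (2 * B) * (pole_sing s \<rho> E q w + pole_sing s \<rho> E q w')
                 + ennreal (8 * B * \<rho> powr -s * \<eta> powr s) * pole_sing s \<eta> E q w"
    using B by (simp add: ennreal_mult mult.assoc)
  finally show ?thesis .
qed

lemma T_integrand_diff_le:
  assumes s: "0 < s" and \<eta>: "0 < \<eta>" and \<rho>: "0 < \<rho>"
    and f_bdd: "\<forall>u\<in>cuhp. cmod (f u) \<le> B" and w: "w \<in> cuhp" and w': "w' \<in> cuhp"
    and close: "cmod (w - w') \<le> \<eta>/2"
    and f_mod: "\<forall>u\<in>cuhp. \<forall>v\<in>cuhp. cmod (u - v) \<le> 2 * cmod (w - w') / \<eta>^2 \<longrightarrow> cmod (f u - f v) \<le> \<epsilon>f"
    and powr_mod: "\<forall>x\<in>{0..2/\<eta>}. \<forall>y\<in>{0..2/\<eta>}.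
                     \<bar>x - y\<bar> \<le> 2 * cmod (w - w') / \<eta>^2 \<longrightarrow> \<bar>x powr s - y powr s\<bar> \<le> \<epsilon>p"
  shows "ennreal (cmod (T_integrand f E s w q - T_integrand f E s w' q))
           \<le> ennreal (\<epsilon>f * (4 * \<eta> powr -s) + 2 * B * \<epsilon>p)
             + ennreal (2 * B) * (pole_sing s \<rho> E q w + pole_sing s \<rho> E q w')
             + ennreal (8 * B * \<rho> powr -s * \<eta> powr s) * pole_sing s \<eta> E q w"
proof (cases "\<eta> \<le> cmod (pole E (fst q) w) \<and> \<eta> \<le> cmod (pole E (snd q) w)")
  case True
  then have "ennreal (cmod (T_integrand f E s w q - T_integrand f E s w' q))
               \<le> ennreal (\<epsilon>f * (4 * \<eta> powr -s) + 2 * B * \<epsilon>p)"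
    using T_integrand_diff_far[OF s \<eta> f_bdd w w' _ _ close f_mod powr_mod] by (simp add: ennreal_leI)
  then show ?thesis by (rule order_trans) (simp add: add.assoc)
next
  case False
  then show ?thesis
    using T_integrand_diff_near[OF s \<eta> \<rho> f_bdd w w', of E q]
    by (simp add: add.assoc not_le add_increasing)
qed

lemma exists_small_powr:
  fixes K \<epsilon> a :: real
  assumes K: "0 \<le> K" and \<epsilon>: "0 < \<epsilon>" and a: "0 < a"
  shows "\<exists>\<rho>>0. K * \<rho> powr a \<le> \<epsilon>"
proof (intro exI conjI)
  define \<rho> where "\<rho> = (\<epsilon> / (K + 1)) powr (1/a)"
  show "0 < \<rho>" using K \<epsilon> by (simp add: \<rho>_def)
  have "\<rho> powr a = \<epsilon> / (K + 1)"
    using K \<epsilon> a by (simp add: \<rho>_def powr_powr)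
  moreover have "K * (\<epsilon> / (K + 1)) \<le> \<epsilon>"
    using K \<epsilon> by (simp add: field_simps)
  ultimately show "K * \<rho> powr a \<le> \<epsilon>" by simp
qed

lemma choose_scales:
  fixes B C \<delta> s :: real
  assumes B: "0 \<le> B" and C: "0 \<le> C" and \<delta>: "0 < \<delta>"
    and s: "0 < s" "s < 1"
  obtains \<rho> \<eta> \<epsilon>f \<epsilon>p where "0 < \<rho>" "0 < \<eta>" "0 < \<epsilon>f" "0 < \<epsilon>p"
    and "\<epsilon>f * (4 * \<eta> powr -s) + 2 * B * \<epsilon>p + 8 * B * C * \<rho> powr (1-s) + 16 * B * C * \<rho> powr -s * \<eta>
           \<le> 3 * \<delta> / 4"
proof -
  have \<delta>': "0 < \<delta> / 4" "0 < \<delta> / 8" using \<delta> by auto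
  obtain \<rho> where \<rho>: "0 < \<rho>" "(8 * B * C) * \<rho> powr (1-s) \<le> \<delta> / 4"
    using exists_small_powr[OF _ \<delta>'(1), of "8 * B * C" "1 - s"] B C s by auto
  obtain \<eta> where \<eta>: "0 < \<eta>" "(16 * B * C * \<rho> powr -s) * \<eta> powr 1 \<le> \<delta> / 4"
    using exists_small_powr[OF _ \<delta>'(1), of "16 * B * C * \<rho> powr -s" 1] B C by auto
  obtain \<epsilon>f where \<epsilon>f: "0 < \<epsilon>f" "(4 * \<eta> powr -s) * \<epsilon>f powr 1 \<le> \<delta> / 8"
    using exists_small_powr[OF _ \<delta>'(2), of "4 * \<eta> powr -s" 1] by auto
  obtain \<epsilon>p where \<epsilon>p: "0 < \<epsilon>p" "(2 * B) * \<epsilon>p powr 1 \<le> \<delta> / 8"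
    using exists_small_powr[OF _ \<delta>'(2), of "2 * B" 1] B by auto
  show ?thesis
    by (rule that[OF \<rho>(1) \<eta>(1) \<epsilon>f(1) \<epsilon>p(1)]) (use \<rho> \<eta> \<epsilon>f \<epsilon>p in \<open>simp add: ac_simps\<close>)
qed

locale bounded_density_setting =
  fixes g :: "real \<Rightarrow> real" and \<sigma> :: "(real \<times> real) measure" and s M :: real
  assumes g_meas [measurable]: "g \<in> borel_measurable borel"
    and g_nonneg: "\<And>x. 0 \<le> g x" and g_le: "\<And>x. g x \<le> M"
    and nu_prob: "prob_space (density lborel (\<lambda>r. ennreal (g r)))"
    and sigma_prob: "prob_space \<sigma>" and sigma_sets: "sets \<sigma> = sets (borel :: (real \<times> real) measure)"
    and s_pos: "0 < s" and s_lt_1: "s < 1"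
begin

definition sing_const :: real where
  "sing_const = 2 * sqrt 2 * M / (1 - s)"

lemma sing_const_nonneg: "0 \<le> sing_const"
  using g_nonneg[of 0] g_le[of 0] s_lt_1 by (simp add: sing_const_def)

lemma prob_space_mu: "prob_space (mu_law g \<sigma> \<kappa>)"
  by (rule prob_space_mu_law[OF nu_prob sigma_prob sigma_sets])

(* The integral estimate along one coordinate of q: the coordinate is r + kappa * sel p with
   r ~ nu, so the one-dimensional estimate applies for each fixed p. *)
lemma nn_integral_trunc_sing_pole:
  fixes sel :: "real \<times> real \<Rightarrow> real"
  assumes [measurable]: "sel \<in> borel_measurable borel"
    and sel_shift: "\<And>r p. sel (r + \<kappa> * fst p, r + \<kappa> * snd p) = r + \<kappa> * sel p"
    and \<rho>: "0 < \<rho>"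
  shows "(\<integral>\<^sup>+q. trunc_sing s \<rho> (pole E (sel q) w) \<partial>mu_law g \<sigma> \<kappa>) \<le> ennreal (sing_const * \<rho> powr (1-s))"
proof -
  interpret S: prob_space \<sigma> by (rule sigma_prob)
  have shift: "pole E (sel (r + \<kappa> * fst p, r + \<kappa> * snd p)) w
                 = pole E (\<kappa> * sel p) w + of_real ((- 1 / sqrt 2) * r)" for r p
    by (simp add: pole_def sel_shift diff_divide_distrib add_divide_distrib algebra_simps)
  have "(\<integral>\<^sup>+q. trunc_sing s \<rho> (pole E (sel q) w) \<partial>mu_law g \<sigma> \<kappa>)
      = (\<integral>\<^sup>+p. (\<integral>\<^sup>+r. ennreal (g r) * trunc_sing s \<rho> (pole E (sel (r + \<kappa> * fst p, r + \<kappa> * snd p)) w) \<partial>lborel) \<partial>\<sigma>)"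
    by (rule nn_integral_mu_law[OF g_meas _ nu_prob sigma_prob sigma_sets]) (simp add: pole_def)
  also have "\<dots> = (\<integral>\<^sup>+p. (\<integral>\<^sup>+r. ennreal (g r) * trunc_sing s \<rho> (pole E (\<kappa> * sel p) w + of_real ((- 1 / sqrt 2) * r)) \<partial>lborel) \<partial>\<sigma>)"
    unfolding shift ..
  also have "\<dots> \<le> (\<integral>\<^sup>+p. ennreal (M / \<bar>- 1 / sqrt 2\<bar> * (2 * \<rho> powr (1-s) / (1-s))) \<partial>\<sigma>)"
    using s_pos s_lt_1 \<rho>
    by (intro nn_integral_mono nn_integral_density_trunc_sing g_meas g_nonneg g_le) auto
  also have "\<dots> = ennreal (sing_const * \<rho> powr (1-s))"
    by (simp add: S.emeasure_space_1 sing_const_def ac_simps)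
  finally show ?thesis .
qed

lemma nn_integral_pole_sing:
  assumes "0 < \<rho>"
  shows "(\<integral>\<^sup>+q. pole_sing s \<rho> E q w \<partial>mu_law g \<sigma> \<kappa>) \<le> ennreal (2 * sing_const * \<rho> powr (1-s))"
proof -
  have "(\<integral>\<^sup>+q. pole_sing s \<rho> E q w \<partial>mu_law g \<sigma> \<kappa>)
      = (\<integral>\<^sup>+q. trunc_sing s \<rho> (pole E (fst q) w) \<partial>mu_law g \<sigma> \<kappa>)
        + (\<integral>\<^sup>+q. trunc_sing s \<rho> (pole E (snd q) w) \<partial>mu_law g \<sigma> \<kappa>)"
    unfolding pole_sing_def pole_def by (rule nn_integral_add) measurable
  also have "\<dots> \<le> ennreal (sing_const * \<rho> powr (1-s)) + ennreal (sing_const * \<rho> powr (1-s))"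
    using assms by (intro add_mono nn_integral_trunc_sing_pole) (auto simp: algebra_simps)
  also have "\<dots> = ennreal (2 * sing_const * \<rho> powr (1-s))"
    using sing_const_nonneg by (simp flip: ennreal_plus)
  finally show ?thesis .
qed

lemma pole_sing_measurable [measurable]: "(\<lambda>q. pole_sing s \<rho> E q w) \<in> borel_measurable (mu_law g \<sigma> \<kappa>)"
  unfolding pole_sing_def pole_def by measurable

lemma T_integrand_nn_integral_le:
  assumes f_bdd: "\<forall>u\<in>cuhp. cmod (f u) \<le> B" and w: "w \<in> cuhp"
  shows "(\<integral>\<^sup>+q. ennreal (cmod (T_integrand f E s w q)) \<partial>mu_law g \<sigma> \<kappa>) \<le> ennreal (2 * B * (2 * sing_const + 2))"
proof -
  interpret prob_space "mu_law g \<sigma> \<kappa>" by (rule prob_space_mu)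
  have B: "0 \<le> B" using f_bdd w by (meson norm_ge_zero order_trans)
  have "(\<integral>\<^sup>+q. ennreal (cmod (T_integrand f E s w q)) \<partial>mu_law g \<sigma> \<kappa>)
          \<le> (\<integral>\<^sup>+q. ennreal (2 * B) * (pole_sing s 1 E q w + ennreal 2) \<partial>mu_law g \<sigma> \<kappa>)"
    using T_integrand_norm_le_sing[OF s_pos zero_less_one f_bdd w] by (intro nn_integral_mono) simp
  also have "\<dots> = ennreal (2 * B) * ((\<integral>\<^sup>+q. pole_sing s 1 E q w \<partial>mu_law g \<sigma> \<kappa>) + ennreal 2)"
    by (simp add: nn_integral_cmult nn_integral_add emeasure_space_1)
  also have "\<dots> \<le> ennreal (2 * B) * (ennreal (2 * sing_const) + ennreal 2)"
    using nn_integral_pole_sing[of 1] by (intro mult_left_mono add_right_mono) auto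
  also have "\<dots> = ennreal (2 * B * (2 * sing_const + 2))"
    using B sing_const_nonneg by (simp add: ennreal_mult ennreal_plus del: ennreal_plus_if)
  finally show ?thesis .
qed

lemma T_integrand_integrable:
  assumes "continuous_on cuhp f" and "\<forall>u\<in>cuhp. cmod (f u) \<le> B" and "w \<in> cuhp"
  shows "integrable (mu_law g \<sigma> \<kappa>) (T_integrand f E s w)"
proof (rule integrableI_bounded)
  show "T_integrand f E s w \<in> borel_measurable (mu_law g \<sigma> \<kappa>)"
    using T_integrand_measurable[OF assms(1,3)] by simp
  show "(\<integral>\<^sup>+q. ennreal (norm (T_integrand f E s w q)) \<partial>mu_law g \<sigma> \<kappa>) < \<infinity>"
    using T_integrand_nn_integral_le[OF assms(2,3)] by (rule le_less_trans) simp
qed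

lemma T_op_norm_le:
  assumes "continuous_on cuhp f" and f_bdd: "\<forall>u\<in>cuhp. cmod (f u) \<le> B" and w: "w \<in> cuhp"
  shows "cmod (T_op g \<sigma> \<kappa> E s f w) \<le> 2 * B * (2 * sing_const + 2)"
proof -
  have B: "0 \<le> B" using f_bdd w by (meson norm_ge_zero order_trans)
  have "ennreal (cmod (T_op g \<sigma> \<kappa> E s f w)) \<le> ennreal (2 * B * (2 * sing_const + 2))"
    unfolding T_op_eq
    using integral_norm_bound_ennreal[OF T_integrand_integrable[OF assms]]
      T_integrand_nn_integral_le[OF f_bdd w]
    by (rule order_trans)
  then show ?thesis using B sing_const_nonneg by (subst (asm) ennreal_le_iff) auto
qed

lemma T_op_diff_le:
  assumes f_cont: "continuous_on cuhp f" and f_bdd: "\<forall>u\<in>cuhp. cmod (f u) \<le> B"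
    and \<eta>: "0 < \<eta>" and \<rho>: "0 < \<rho>" and w: "w \<in> cuhp" and w': "w' \<in> cuhp"
    and close: "cmod (w - w') \<le> \<eta>/2"
    and f_mod: "\<forall>u\<in>cuhp. \<forall>v\<in>cuhp. cmod (u - v) \<le> 2 * cmod (w - w') / \<eta>^2 \<longrightarrow> cmod (f u - f v) \<le> \<epsilon>f"
    and powr_mod: "\<forall>x\<in>{0..2/\<eta>}. \<forall>y\<in>{0..2/\<eta>}.
                     \<bar>x - y\<bar> \<le> 2 * cmod (w - w') / \<eta>^2 \<longrightarrow> \<bar>x powr s - y powr s\<bar> \<le> \<epsilon>p"
    and \<epsilon>: "0 \<le> \<epsilon>f" "0 \<le> \<epsilon>p"
  shows "cmod (T_op g \<sigma> \<kappa> E s f w - T_op g \<sigma> \<kappa> E s f w')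
           \<le> \<epsilon>f * (4 * \<eta> powr -s) + 2 * B * \<epsilon>p
             + 8 * B * sing_const * \<rho> powr (1-s) + 16 * B * sing_const * \<rho> powr -s * \<eta>"
proof -
  interpret prob_space "mu_law g \<sigma> \<kappa>" by (rule prob_space_mu)
  let ?F = "\<lambda>q. T_integrand f E s w q - T_integrand f E s w' q"
  let ?a = "\<epsilon>f * (4 * \<eta> powr -s) + 2 * B * \<epsilon>p"
  have B: "0 \<le> B" using f_bdd w by (meson norm_ge_zero order_trans)
  have "(\<integral>\<^sup>+q. ennreal (cmod (?F q)) \<partial>mu_law g \<sigma> \<kappa>)
          \<le> (\<integral>\<^sup>+q. ennreal ?a + ennreal (2 * B) * (pole_sing s \<rho> E q w + pole_sing s \<rho> E q w')
                 + ennreal (8 * B * \<rho> powr -s * \<eta> powr s) * pole_sing s \<eta> E q w \<partial>mu_law g \<sigma> \<kappa>)"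
    by (intro nn_integral_mono T_integrand_diff_le s_pos \<eta> \<rho> f_bdd w w' close f_mod powr_mod)
  also have "\<dots> = ennreal ?a + ennreal (2 * B) * ((\<integral>\<^sup>+q. pole_sing s \<rho> E q w \<partial>mu_law g \<sigma> \<kappa>)
                   + (\<integral>\<^sup>+q. pole_sing s \<rho> E q w' \<partial>mu_law g \<sigma> \<kappa>))
                 + ennreal (8 * B * \<rho> powr -s * \<eta> powr s) * (\<integral>\<^sup>+q. pole_sing s \<eta> E q w \<partial>mu_law g \<sigma> \<kappa>)"
    by (simp add: nn_integral_cmult nn_integral_add emeasure_space_1)
  also have "\<dots> \<le> ennreal ?a + ennreal (2 * B) * (ennreal (2 * sing_const * \<rho> powr (1-s))
                   + ennreal (2 * sing_const * \<rho> powr (1-s)))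
                 + ennreal (8 * B * \<rho> powr -s * \<eta> powr s) * ennreal (2 * sing_const * \<eta> powr (1-s))"
    by (intro add_mono mult_left_mono nn_integral_pole_sing \<rho> \<eta> order_refl) auto
  also have "\<dots> = ennreal (?a + 8 * B * sing_const * \<rho> powr (1-s) + 16 * B * sing_const * \<rho> powr -s * (\<eta> powr s * \<eta> powr (1-s)))"
    using B \<epsilon> sing_const_nonneg by (simp add: ac_simps flip: ennreal_mult ennreal_plus)
  also have "\<eta> powr s * \<eta> powr (1-s) = \<eta>"
    using \<eta> by (simp flip: powr_add)
  finally have int_le: "(\<integral>\<^sup>+q. ennreal (cmod (?F q)) \<partial>mu_law g \<sigma> \<kappa>)
      \<le> ennreal (?a + 8 * B * sing_const * \<rho> powr (1-s) + 16 * B * sing_const * \<rho> powr -s * \<eta>)" .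
  have "T_op g \<sigma> \<kappa> E s f w - T_op g \<sigma> \<kappa> E s f w' = integral\<^sup>L (mu_law g \<sigma> \<kappa>) ?F"
    unfolding T_op_eq
    using T_integrand_integrable[OF f_cont f_bdd w] T_integrand_integrable[OF f_cont f_bdd w']
    by (rule Bochner_Integration.integral_diff[symmetric])
  then have "ennreal (cmod (T_op g \<sigma> \<kappa> E s f w - T_op g \<sigma> \<kappa> E s f w'))
               \<le> (\<integral>\<^sup>+q. ennreal (cmod (?F q)) \<partial>mu_law g \<sigma> \<kappa>)"
    using integral_norm_bound_ennreal[OF Bochner_Integration.integrable_diff[OF
        T_integrand_integrable[OF f_cont f_bdd w] T_integrand_integrable[OF f_cont f_bdd w']]]
    by simp
  also note int_le
  finally show ?thesis
    using B \<epsilon> \<eta> \<rho> sing_const_nonneg by (subst (asm) ennreal_le_iff) auto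
qed

lemma T_op_uniformly_equicontinuous:
  fixes f :: "'a \<Rightarrow> complex \<Rightarrow> complex"
  assumes B: "0 \<le> B" and f_cont: "\<And>\<alpha>. \<alpha> \<in> J \<Longrightarrow> continuous_on cuhp (f \<alpha>)"
    and f_bdd: "\<forall>\<alpha>\<in>J. \<forall>u\<in>cuhp. cmod (f \<alpha> u) \<le> B"
    and f_equi: "\<forall>\<delta>>0. \<exists>\<delta>'>0. \<forall>\<alpha>\<in>J. \<forall>w\<in>cuhp. \<forall>w'\<in>cuhp.
                   cmod (w - w') < \<delta>' \<longrightarrow> cmod (f \<alpha> w - f \<alpha> w') < \<delta>"
    and \<delta>: "0 < \<delta>"
  shows "\<exists>\<delta>'>0. \<forall>\<kappa> E. \<forall>\<alpha>\<in>J. \<forall>w\<in>cuhp. \<forall>w'\<in>cuhp.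
           cmod (w - w') < \<delta>' \<longrightarrow> cmod (T_op g \<sigma> \<kappa> E s (f \<alpha>) w - T_op g \<sigma> \<kappa> E s (f \<alpha>) w') < \<delta>"
proof -
  obtain \<rho> \<eta> \<epsilon>f \<epsilon>p where pos: "0 < \<rho>" "0 < \<eta>" "0 < \<epsilon>f" "0 < \<epsilon>p"
    and total: "\<epsilon>f * (4 * \<eta> powr -s) + 2 * B * \<epsilon>p + 8 * B * sing_const * \<rho> powr (1-s)
                  + 16 * B * sing_const * \<rho> powr -s * \<eta> \<le> 3 * \<delta> / 4"
    using choose_scales[OF B sing_const_nonneg \<delta> s_pos s_lt_1] by blast
  obtain \<delta>f where \<delta>f: "0 < \<delta>f" "\<forall>\<alpha>\<in>J. \<forall>u\<in>cuhp. \<forall>v\<in>cuhp. cmod (u - v) < \<delta>f \<longrightarrow> cmod (f \<alpha> u - f \<alpha> v) < \<epsilon>f"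
    using f_equi pos(3) by blast
  have "uniformly_continuous_on {0..2/\<eta>} (\<lambda>x::real. x powr s)"
    by (intro compact_uniformly_continuous continuous_on_powr') (auto simp: s_pos intro: continuous_intros)
  then obtain \<delta>p where \<delta>p: "0 < \<delta>p"
    "\<forall>x\<in>{0..2/\<eta>}. \<forall>y\<in>{0..2/\<eta>}. dist y x < \<delta>p \<longrightarrow> dist (y powr s) (x powr s) < \<epsilon>p"
    using pos(4) unfolding uniformly_continuous_on_def by blast
  show ?thesis
  proof (intro exI[of _ "min (\<eta>/2) (min (\<delta>f * \<eta>^2/2) (\<delta>p * \<eta>^2/2))"] conjI allI ballI impI)
    show "0 < min (\<eta>/2) (min (\<delta>f * \<eta>^2/2) (\<delta>p * \<eta>^2/2))" using pos \<delta>f \<delta>p by simp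
    fix \<kappa> E \<alpha> w w'
    assume \<alpha>: "\<alpha> \<in> J" and w: "w \<in> cuhp" and w': "w' \<in> cuhp"
      and close: "cmod (w - w') < min (\<eta>/2) (min (\<delta>f * \<eta>^2/2) (\<delta>p * \<eta>^2/2))"
    have L: "2 * cmod (w - w') / \<eta>^2 < \<delta>f" "2 * cmod (w - w') / \<eta>^2 < \<delta>p"
      using close pos(2) by (simp_all add: field_simps)
    have f_mod: "\<forall>u\<in>cuhp. \<forall>v\<in>cuhp. cmod (u - v) \<le> 2 * cmod (w - w') / \<eta>^2 \<longrightarrow> cmod (f \<alpha> u - f \<alpha> v) \<le> \<epsilon>f"
      using \<delta>f(2) \<alpha> L(1) by (meson le_less_trans less_imp_le)
    have powr_mod: "\<forall>x\<in>{0..2/\<eta>}. \<forall>y\<in>{0..2/\<eta>}.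
                      \<bar>x - y\<bar> \<le> 2 * cmod (w - w') / \<eta>^2 \<longrightarrow> \<bar>x powr s - y powr s\<bar> \<le> \<epsilon>p"
      using \<delta>p(2) L(2) by (force simp: dist_real_def abs_minus_commute)
    have "cmod (w - w') \<le> \<eta>/2" using close by simp
    then have "cmod (T_op g \<sigma> \<kappa> E s (f \<alpha>) w - T_op g \<sigma> \<kappa> E s (f \<alpha>) w') \<le> 3 * \<delta> / 4"
      using T_op_diff_le[OF f_cont[OF \<alpha>] bspec[OF f_bdd \<alpha>] pos(2,1) w w' _ f_mod powr_mod,
          of \<kappa> E] pos total
      by linarith
    then show "cmod (T_op g \<sigma> \<kappa> E s (f \<alpha>) w - T_op g \<sigma> \<kappa> E s (f \<alpha>) w') < \<delta>" using \<delta> by linarith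
  qed
qed

end

theorem lemma7p1:
  fixes g :: "real \<Rightarrow> real" and K :: real and \<sigma> :: "(real \<times> real) measure"
    and s :: real and J :: "'a set" and f :: "'a \<Rightarrow> complex \<Rightarrow> complex"
  assumes g_meas: "g \<in> borel_measurable borel"
    and g_nonneg: "\<And>x. g x \<ge> 0"
    and g_bdd: "\<exists>M. \<forall>x. g x \<le> M"
    and g_supp: "\<And>x. x \<notin> {-K..K} \<Longrightarrow> g x = 0"
    and nu_prob: "prob_space (density lborel (\<lambda>r. ennreal (g r)))"
    and sigma_prob: "prob_space \<sigma>"
    and sigma_sets: "sets \<sigma> = sets (borel :: (real \<times> real) measure)"
    and sigma_supp: "emeasure \<sigma> (UNIV - {-1..1} \<times> {-1..1}) = 0"
    and s_pos: "0 < s" and s_lt: "s < 1/2"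
    and f_C: "\<And>\<alpha>. \<alpha> \<in> J \<Longrightarrow> in_C_cuhp (f \<alpha>)"
    and f_bdd: "\<exists>B. \<forall>\<alpha>\<in>J. \<forall>w\<in>cuhp. cmod (f \<alpha> w) \<le> B"
    and f_equi: "\<forall>\<delta>>0. \<exists>\<delta>'>0. \<forall>\<alpha>\<in>J. \<forall>w\<in>cuhp. \<forall>w'\<in>cuhp.
                    cmod (w - w') < \<delta>' \<longrightarrow> cmod (f \<alpha> w - f \<alpha> w') < \<delta>"
  shows "(\<exists>B. \<forall>\<kappa>\<ge>0. \<forall>E. \<forall>\<alpha>\<in>J. \<forall>w\<in>cuhp. cmod (T_op g \<sigma> \<kappa> E s (f \<alpha>) w) \<le> B)
       \<and> (\<forall>\<delta>>0. \<exists>\<delta>'>0. \<forall>\<kappa>\<ge>0. \<forall>E. \<forall>\<alpha>\<in>J. \<forall>w\<in>cuhp. \<forall>w'\<in>cuhp.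
              cmod (w - w') < \<delta>' \<longrightarrow>
              cmod (T_op g \<sigma> \<kappa> E s (f \<alpha>) w - T_op g \<sigma> \<kappa> E s (f \<alpha>) w') < \<delta>)"
proof -
  obtain M where M: "\<And>x. g x \<le> M" using g_bdd by blast
  interpret bounded_density_setting g \<sigma> s M
    using s_lt by (intro bounded_density_setting.intro g_meas g_nonneg M nu_prob sigma_prob sigma_sets s_pos) simp
  obtain B0 where "\<forall>\<alpha>\<in>J. \<forall>w\<in>cuhp. cmod (f \<alpha> w) \<le> B0" using f_bdd by blast
  then have f_bdd': "\<forall>\<alpha>\<in>J. \<forall>w\<in>cuhp. cmod (f \<alpha> w) \<le> max 0 B0" by force
  have f_cont: "\<And>\<alpha>. \<alpha> \<in> J \<Longrightarrow> continuous_on cuhp (f \<alpha>)"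
    using f_C by (simp add: in_C_cuhp_def)
  have bounded: "cmod (T_op g \<sigma> \<kappa> E s (f \<alpha>) w) \<le> 2 * max 0 B0 * (2 * sing_const + 2)"
    if "\<alpha> \<in> J" "w \<in> cuhp" for \<kappa> E \<alpha> w
    by (rule T_op_norm_le[OF f_cont[OF that(1)] bspec[OF f_bdd' that(1)] that(2)])
  show ?thesis
  proof (intro conjI allI impI)
    show "\<exists>B. \<forall>\<kappa>\<ge>0. \<forall>E. \<forall>\<alpha>\<in>J. \<forall>w\<in>cuhp. cmod (T_op g \<sigma> \<kappa> E s (f \<alpha>) w) \<le> B"
      using bounded by (intro exI allI impI ballI)
    fix \<delta> :: real assume "0 < \<delta>"
    from T_op_uniformly_equicontinuous[OF _ f_cont f_bdd' f_equi this]
    obtain \<delta>' where "0 < \<delta>'" and equicont: "\<forall>\<kappa> E. \<forall>\<alpha>\<in>J. \<forall>w\<in>cuhp. \<forall>w'\<in>cuhp.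
        cmod (w - w') < \<delta>' \<longrightarrow> cmod (T_op g \<sigma> \<kappa> E s (f \<alpha>) w - T_op g \<sigma> \<kappa> E s (f \<alpha>) w') < \<delta>"
      by auto
    then show "\<exists>\<delta>'>0. \<forall>\<kappa>\<ge>0. \<forall>E. \<forall>\<alpha>\<in>J. \<forall>w\<in>cuhp. \<forall>w'\<in>cuhp.
        cmod (w - w') < \<delta>' \<longrightarrow> cmod (T_op g \<sigma> \<kappa> E s (f \<alpha>) w - T_op g \<sigma> \<kappa> E s (f \<alpha>) w') < \<delta>"
      by auto
  qed
qed

end
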